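(* Let $n\ge2$, $\mathcal{L}_n=\{(i,j)\in[n]^2:i>j\}$, $\bar n=|\mathcal{L}_n|=n(n-1)/2$. For $\Omega\in[0,1]^{\mathcal{L}_n}$ let $P^{(\bar n)}_\Omega=\bigotimes_{(i,j)\in\mathcal{L}_n}\mathrm{Bern}(\Omega_{i,j})$ be the distribution of $Y=(Y_{i,j})_{(i,j)\in\mathcal{L}_n}\in\{0,1\}^{\mathcal{L}_n}$, and let $q^\natural(\Omega,Y)=\prod_{(i,j)\in\mathcal{L}_n}e^{-(Y_{i,j}-\Omega_{i,j})^2}$. Let $\bar\rho>0$. Then for all $\Omega_0,\Omega_1\in[0,1]^{\mathcal{L}_n}$, $$P^{(\bar n)}_{\Omega_0}\Big(\frac{q^\natural(\Omega_1,Y)}{q^\natural(\Omega_0,Y)}\Big)\le e^{-\frac12\bar nd^2(\Omega_0,\Omega_1)},\qquad P^{(\bar n)}_{\Omega_0}\Big(\frac{q^\natural(\Omega_0,Y)}{q^\natural(\Omega_1,Y)}\Big)^{\bar\rho}\le e^{\frac{\bar\rho(\bar\rho+2)}{2}\bar nd^2(\Omega_0,\Omega_1)},$$ where $d(\Omega_0,\Omega_1)=\big(\frac{2}{n(n-1)}\sum_{(i,j)\in\mathcal{L}_n}(\Omega_{0,i,j}-\Omega_{1,i,j})^2\big)^{1/2}$.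
   Context: $P g$ denotes the expectation of $g$ under $P$. *)

theory Defs
  imports "HOL-Probability.Probability"
begin

definition lowerpairs :: "nat \<Rightarrow> (nat \<times> nat) set" where
  "lowerpairs n = {(i, j). i \<in> {1..n} \<and> j \<in> {1..n} \<and> j < i}"

definition nbar :: "nat \<Rightarrow> real" where
  "nbar n = real (card (lowerpairs n))"

text \<open>Product of Bernoulli(Omega_ij) over L_n; Y_ij = True encodes Y_ij = 1.\<close>
definition P_Omega :: "nat \<Rightarrow> (nat \<times> nat \<Rightarrow> real) \<Rightarrow> (nat \<times> nat \<Rightarrow> bool) pmf" where
  "P_Omega n \<Omega> = Pi_pmf (lowerpairs n) False (\<lambda>ij. bernoulli_pmf (\<Omega> ij))"

definition q_nat :: "nat \<Rightarrow> (nat \<times> nat \<Rightarrow> real) \<Rightarrow> (nat \<times> nat \<Rightarrow> bool) \<Rightarrow> real" where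
  "q_nat n \<Omega> Y = (\<Prod>ij\<in>lowerpairs n. exp (- (of_bool (Y ij) - \<Omega> ij)\<^sup>2))"

definition d_L :: "nat \<Rightarrow> (nat \<times> nat \<Rightarrow> real) \<Rightarrow> (nat \<times> nat \<Rightarrow> real) \<Rightarrow> real" where
  "d_L n \<Omega>0 \<Omega>1 = sqrt (2 / (real n * (real n - 1)) * (\<Sum>ij\<in>lowerpairs n. (\<Omega>0 ij - \<Omega>1 ij)\<^sup>2))"

end

theory Submission
  imports Defs
begin

text \<open>
  For a single coordinate with Bernoulli(p) observation b, the log-ratio of the two factors is
  (b - q)^2 - (b - p)^2 = (p - q)^2 + 2 (p - q) (b - p), i.e. a constant plus a multiple of the
  centred variable b - p. Hoeffding's lemma bounds the moment generating function of b - p by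
  exp (h^2 / 8), so the c-th power of the factor ratio has expectation at most
  exp ((c^2 / 2 + c) (p - q)^2), for every real c. Under the
  product measure the expectation of the product over L_n factorises, and taking c = -1 and c = \<rho>
  gives the two bounds, since nbar n * d^2 is the sum of squared differences.
\<close>

lemma bernoulli_centered_mgf_le:
  fixes p h :: real
  assumes "0 \<le> p" "p \<le> 1"
  shows "measure_pmf.expectation (bernoulli_pmf p) (\<lambda>b. exp (h * (of_bool b - p))) \<le> exp (h\<^sup>2 / 8)"
proof -
  have mgf_le: "p * exp (h * (1 - p)) + (1 - p) * exp (- h * p) \<le> exp (h\<^sup>2 / 8)"
    if "h \<ge> 0" "0 \<le> p" "p \<le> 1" for h p :: real
  proof -
    have pos: "1 + p * (exp h - 1) > 0"
      using that by (intro add_pos_nonneg mult_nonneg_nonneg) auto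
    have "p * exp (h * (1 - p)) + (1 - p) * exp (- h * p) = exp (- h * p) * (1 + p * (exp h - 1))"
      by (simp add: algebra_simps flip: exp_add)
    also have "\<dots> = exp (- h * p + ln (1 + p * (exp h - 1)))"
      using pos by (subst exp_add) simp
    also have "\<dots> \<le> exp (h\<^sup>2 / 8)"
      using Hoeffdings_lemma_aux[of h p] that by simp
    finally show ?thesis .
  qed
  have "p * exp (h * (1 - p)) + (1 - p) * exp (- h * p) \<le> exp (h\<^sup>2 / 8)"
  proof (cases "h \<ge> 0")
    case True
    then show ?thesis using mgf_le assms by blast
  next
    case False
    \<comment> \<open>b - p under Bernoulli(p) is distributed as p - b under Bernoulli(1 - p)\<close>
    have "(1 - p) * exp (- h * (1 - (1 - p))) + (1 - (1 - p)) * exp (- (- h) * (1 - p))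
          \<le> exp ((- h)\<^sup>2 / 8)"
      using False assms by (intro mgf_le) auto
    then show ?thesis by (simp add: algebra_simps)
  qed
  then show ?thesis
    using assms by (simp add: algebra_simps)
qed

lemma bernoulli_sq_loss_ratio_mgf_le:
  fixes p q c :: real
  assumes "0 \<le> p" "p \<le> 1"
  shows "measure_pmf.expectation (bernoulli_pmf p)
           (\<lambda>b. exp (c * ((of_bool b - q)\<^sup>2 - (of_bool b - p)\<^sup>2)))
         \<le> exp ((c\<^sup>2 / 2 + c) * (p - q)\<^sup>2)"
proof -
  define h where "h = 2 * c * (p - q)"
  have split: "exp (c * ((x - q)\<^sup>2 - (x - p)\<^sup>2)) = exp (c * (p - q)\<^sup>2) * exp (h * (x - p))" for x
    unfolding h_def by (simp add: power2_eq_square algebra_simps flip: exp_add)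
  have "measure_pmf.expectation (bernoulli_pmf p)
          (\<lambda>b. exp (c * ((of_bool b - q)\<^sup>2 - (of_bool b - p)\<^sup>2)))
        = exp (c * (p - q)\<^sup>2)
          * measure_pmf.expectation (bernoulli_pmf p) (\<lambda>b. exp (h * (of_bool b - p)))"
    by (simp only: split integral_mult_right_zero)
  also have "\<dots> \<le> exp (c * (p - q)\<^sup>2) * exp (h\<^sup>2 / 8)"
    using bernoulli_centered_mgf_le[OF assms] by (intro mult_left_mono) auto
  also have "\<dots> = exp ((c\<^sup>2 / 2 + c) * (p - q)\<^sup>2)"
    unfolding h_def by (simp add: power2_eq_square field_simps flip: exp_add)
  finally show ?thesis .
qed

lemma finite_lowerpairs: "finite (lowerpairs n)"
  by (rule finite_subset[of _ "{1..n} \<times> {1..n}"]) (auto simp: lowerpairs_def)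

lemma card_lowerpairs: "real (card (lowerpairs n)) = real n * (real n - 1) / 2"
proof (induction n)
  case 0
  then show ?case by (simp add: lowerpairs_def)
next
  case (Suc n)
  have "lowerpairs (Suc n) = lowerpairs n \<union> (\<lambda>j. (Suc n, j)) ` {1..n}"
    by (auto simp: lowerpairs_def)
  moreover have "lowerpairs n \<inter> (\<lambda>j. (Suc n, j)) ` {1..n} = {}"
    by (auto simp: lowerpairs_def)
  ultimately have "card (lowerpairs (Suc n)) = card (lowerpairs n) + n"
    using finite_lowerpairs by (simp add: card_Un_disjoint card_image inj_on_def)
  then show ?case
    using Suc by (simp add: algebra_simps)
qed

lemma nbar_mult_d_L_sq:
  assumes "n \<ge> 2"
  shows "nbar n * (d_L n \<Omega>0 \<Omega>1)\<^sup>2 = (\<Sum>ij\<in>lowerpairs n. (\<Omega>0 ij - \<Omega>1 ij)\<^sup>2)"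
proof -
  have "real n * (real n - 1) > 0"
    using assms by simp
  then show ?thesis
    unfolding nbar_def card_lowerpairs d_L_def
    by (subst real_sqrt_pow2) (auto intro!: divide_nonneg_pos sum_nonneg)
qed

lemma q_nat_ratio_powr:
  "(q_nat n \<Omega>0 Y / q_nat n \<Omega>1 Y) powr c
   = (\<Prod>ij\<in>lowerpairs n. exp (c * ((of_bool (Y ij) - \<Omega>1 ij)\<^sup>2 - (of_bool (Y ij) - \<Omega>0 ij)\<^sup>2)))"
proof -
  have "q_nat n \<Omega>0 Y / q_nat n \<Omega>1 Y
        = exp (\<Sum>ij\<in>lowerpairs n. (of_bool (Y ij) - \<Omega>1 ij)\<^sup>2 - (of_bool (Y ij) - \<Omega>0 ij)\<^sup>2)"
    unfolding q_nat_def exp_sum[OF finite_lowerpairs] prod_dividef[symmetric]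
    by (rule prod.cong) (simp_all flip: exp_diff)
  then show ?thesis
    by (simp add: powr_def sum_distrib_left finite_lowerpairs flip: exp_sum)
qed

lemma expectation_q_nat_ratio_powr_le:
  assumes "\<forall>ij\<in>lowerpairs n. \<Omega>0 ij \<in> {0..1}"
  shows "measure_pmf.expectation (P_Omega n \<Omega>0) (\<lambda>Y. (q_nat n \<Omega>0 Y / q_nat n \<Omega>1 Y) powr c)
         \<le> exp ((c\<^sup>2 / 2 + c) * (\<Sum>ij\<in>lowerpairs n. (\<Omega>0 ij - \<Omega>1 ij)\<^sup>2))"
proof -
  have "measure_pmf.expectation (P_Omega n \<Omega>0) (\<lambda>Y. (q_nat n \<Omega>0 Y / q_nat n \<Omega>1 Y) powr c)
        = (\<Prod>ij\<in>lowerpairs n. measure_pmf.expectation (bernoulli_pmf (\<Omega>0 ij))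
             (\<lambda>b. exp (c * ((of_bool b - \<Omega>1 ij)\<^sup>2 - (of_bool b - \<Omega>0 ij)\<^sup>2))))"
    unfolding q_nat_ratio_powr P_Omega_def
    by (rule expectation_prod_Pi_pmf[OF finite_lowerpairs]) (auto intro: integrable_measure_pmf_finite)
  also have "\<dots> \<le> (\<Prod>ij\<in>lowerpairs n. exp ((c\<^sup>2 / 2 + c) * (\<Omega>0 ij - \<Omega>1 ij)\<^sup>2))"
    using assms by (intro prod_mono conjI bernoulli_sq_loss_ratio_mgf_le integral_nonneg_AE) auto
  also have "\<dots> = exp ((c\<^sup>2 / 2 + c) * (\<Sum>ij\<in>lowerpairs n. (\<Omega>0 ij - \<Omega>1 ij)\<^sup>2))"
    by (simp add: exp_sum sum_distrib_left finite_lowerpairs)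
  finally show ?thesis .
qed

theorem lemma7p3:
  fixes n :: nat and \<rho> :: real and \<Omega>0 \<Omega>1 :: "nat \<times> nat \<Rightarrow> real"
  assumes "n \<ge> 2" and "\<rho> > 0"
    and "\<forall>ij\<in>lowerpairs n. \<Omega>0 ij \<in> {0..1}"
    and "\<forall>ij\<in>lowerpairs n. \<Omega>1 ij \<in> {0..1}"
  shows "measure_pmf.expectation (P_Omega n \<Omega>0) (\<lambda>Y. q_nat n \<Omega>1 Y / q_nat n \<Omega>0 Y)
           \<le> exp (- (1/2) * nbar n * (d_L n \<Omega>0 \<Omega>1)\<^sup>2)
       \<and> measure_pmf.expectation (P_Omega n \<Omega>0) (\<lambda>Y. (q_nat n \<Omega>0 Y / q_nat n \<Omega>1 Y) powr \<rho>)
           \<le> exp (\<rho> * (\<rho> + 2) / 2 * nbar n * (d_L n \<Omega>0 \<Omega>1)\<^sup>2)"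
proof
  \<comment> \<open>the bound holds for every real exponent\<close>
  have q_nat_pos: "q_nat n \<Omega> Y > 0" for \<Omega> Y
    unfolding q_nat_def by (simp add: prod_pos)
  have inverse_ratio: "q_nat n \<Omega>1 Y / q_nat n \<Omega>0 Y = (q_nat n \<Omega>0 Y / q_nat n \<Omega>1 Y) powr (-1)" for Y
    using q_nat_pos[of \<Omega>0 Y] q_nat_pos[of \<Omega>1 Y] by (simp add: powr_minus)
  note sum_sq = nbar_mult_d_L_sq[OF assms(1)]
  have exponent1: "- (1/2) * nbar n * (d_L n \<Omega>0 \<Omega>1)\<^sup>2
      = ((-1)\<^sup>2 / 2 + -1) * (nbar n * (d_L n \<Omega>0 \<Omega>1)\<^sup>2)"
    by simp
  have exponent2: "\<rho> * (\<rho> + 2) / 2 * nbar n * (d_L n \<Omega>0 \<Omega>1)\<^sup>2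
      = (\<rho>\<^sup>2 / 2 + \<rho>) * (nbar n * (d_L n \<Omega>0 \<Omega>1)\<^sup>2)"
    by (simp add: power2_eq_square algebra_simps)
  show "measure_pmf.expectation (P_Omega n \<Omega>0) (\<lambda>Y. q_nat n \<Omega>1 Y / q_nat n \<Omega>0 Y)
          \<le> exp (- (1/2) * nbar n * (d_L n \<Omega>0 \<Omega>1)\<^sup>2)"
    unfolding inverse_ratio exponent1 sum_sq by (rule expectation_q_nat_ratio_powr_le[OF assms(3)])
  show "measure_pmf.expectation (P_Omega n \<Omega>0) (\<lambda>Y. (q_nat n \<Omega>0 Y / q_nat n \<Omega>1 Y) powr \<rho>)
          \<le> exp (\<rho> * (\<rho> + 2) / 2 * nbar n * (d_L n \<Omega>0 \<Omega>1)\<^sup>2)"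
    unfolding exponent2 sum_sq by (rule expectation_q_nat_ratio_powr_le[OF assms(3)])
qed

end
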